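(* Let $p$ be an odd prime, $n\ge1$, $K(n)_*=\mathbb{F}_p[v_n,v_n^{-1}]$ with $\deg v_n=-2(p^n-1)$, and let $R_*$ be a graded-commutative $K(n)_*$-algebra. Consider the graded $R_*$-algebras $R_*[x]/(x^{p^n})\otimes E(\epsilon)$ and $R_*[x_1,x_2]/(x_1,x_2)^{p^n}\otimes E(\epsilon_1,\epsilon_2)$ with $\deg\epsilon,\deg\epsilon_i=1$, $\deg x,\deg x_i=2$ ($E$ denoting exterior algebras). Let $\operatorname{Aut}_{G_a}(R_* )$ be the set of quasi-strict automorphisms of the 2-dimensional additive formal group law chunk $G_a=(\epsilon_1+\epsilon_2,\,x_1+x_2)$, i.e. pairs $f=(f(1)(\epsilon,x),f(2)(\epsilon,x))$ of elements of $R_*[x]/(x^{p^n})\otimes E(\epsilon)$ which are homogeneous of degrees $1$ and $2$ respectively, have zero constant terms, satisfy $$f(j)(\epsilon_1+\epsilon_2,x_1+x_2)=f(j)(\epsilon_1,x_1)+f(j)(\epsilon_2,x_2)\quad(j=1,2),$$ and satisfy $f(1)\equiv\epsilon+a_0x$, $f(2)\equiv x \bmod (x)^2$ for some $a_0\in R_1$; the product is $f\cdot g=g\circ f=(g(1)(f(1),f(2)),g(2)(f(1),f(2)))$. Let $$B_*=K(n)_*[\xi_1,\dots,\xi_{n-1}]\otimes E(\tau_0,\dots,\tau_{n-1}),\qquad \deg\tau_i=-(2p^i-1),\ \deg\xi_i=-2(p^i-1),$$ be the Hopf algebra with coproduct $\tau_k\mapsto\tau_k\otimes1+\sum_{i=0}^k\xi_{k-i}^{p^i}\otimes\tau_i$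 and $\xi_k\mapsto\sum_{i=0}^k\xi_{k-i}^{p^i}\otimes\xi_i$ (with $\xi_0=1$). Then $B_*$ corepresents the group-valued functor $\operatorname{Aut}_{G_a}(-)$: the assignment $$\theta\longmapsto\Big(\epsilon+\sum_{i=0}^{n-1}\theta(\tau_i)x^{p^i},\ x+\sum_{i=1}^{n-1}\theta(\xi_i)x^{p^i}\Big)$$ is a natural isomorphism $\operatorname{Hom}_{K(n)_*\text{-alg}}(B_*,-)\cong\operatorname{Aut}_{G_a}(-)$ of group-valued functors.
   Context: Grading conventions: an element of $R_m$ has degree $-m$; total degree counts $\deg x=2$, $\deg\epsilon=1$. The group structure on $\operatorname{Hom}_{K(n)_*\text{-alg}}(B_*,R_* )$ is the convolution induced by the coproduct of $B_*$. *)

theory Defs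
  imports "HOL-Computational_Algebra.Primes"
begin

text \<open>A graded ring R_* is modelled by a ring type 'r together with the family
  of homogeneous pieces G m = R_m (m :: int); an element of R_m has degree -m.
  R is the internal direct sum of the R_m.\<close>

definition graded_ring :: "(int \<Rightarrow> 'r::ring_1 set) \<Rightarrow> bool" where
  "graded_ring G \<longleftrightarrow>
     (\<forall>m. 0 \<in> G m \<and> (\<forall>a\<in>G m. \<forall>b\<in>G m. a + b \<in> G m \<and> - a \<in> G m)) \<and>
     (\<forall>m k. \<forall>a\<in>G m. \<forall>b\<in>G k. a * b \<in> G (m + k)) \<and>
     1 \<in> G 0 \<and>
     (\<forall>r. \<exists>M c. finite M \<and> (\<forall>m\<in>M. c m \<in> G m) \<and> r = (\<Sum>m\<in>M. c m)) \<and>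
     (\<forall>M c. finite M \<and> (\<forall>m\<in>M. c m \<in> G m) \<and> (\<Sum>m\<in>M. c m) = 0 \<longrightarrow> (\<forall>m\<in>M. c m = 0))"

definition graded_comm :: "(int \<Rightarrow> 'r::ring_1 set) \<Rightarrow> bool" where
  "graded_comm G \<longleftrightarrow>
     (\<forall>m k. \<forall>a\<in>G m. \<forall>b\<in>G k. a * b = (if even (m * k) then b * a else - (b * a)))"

text \<open>A graded-commutative K(n)_*-algebra, K(n)_* = F_p[v_n, v_n^{-1}],
  deg v_n = -2(p^n-1): characteristic p, plus the image v of v_n, a unit in
  R_{2(p^n-1)}.\<close>

definition gc_Kn_alg :: "nat \<Rightarrow> nat \<Rightarrow> (int \<Rightarrow> 'r::ring_1 set) \<Rightarrow> 'r \<Rightarrow> bool" where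
  "gc_Kn_alg p n G v \<longleftrightarrow> graded_ring G \<and> graded_comm G \<and> of_nat p = (0::'r) \<and>
     v \<in> G (2 * (int p ^ n - 1)) \<and>
     (\<exists>w \<in> G (- 2 * (int p ^ n - 1)). v * w = 1 \<and> w * v = 1)"

definition Kn_alg_hom :: "(int \<Rightarrow> 'r::ring_1 set) \<Rightarrow> 'r \<Rightarrow> (int \<Rightarrow> 's::ring_1 set) \<Rightarrow> 's
     \<Rightarrow> ('r \<Rightarrow> 's) \<Rightarrow> bool" where
  "Kn_alg_hom G v G' v' \<phi> \<longleftrightarrow>
     (\<forall>a b. \<phi> (a + b) = \<phi> a + \<phi> b) \<and> (\<forall>a b. \<phi> (a * b) = \<phi> a * \<phi> b) \<and>
     \<phi> 1 = 1 \<and> (\<forall>m. \<forall>a\<in>G m. \<phi> a \<in> G' m) \<and> \<phi> v = v'"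

text \<open>An element  \<Sum>_k a_k x^k + \<Sum>_k b_k x^k \<epsilon>  (coefficients on the left)
  is represented by the pair (a, b); a_k = b_k = 0 for k \<ge> N.\<close>

type_synonym 'r A1 = "(nat \<Rightarrow> 'r) \<times> (nat \<Rightarrow> 'r)"

definition A1_elem :: "nat \<Rightarrow> 'r::ring_1 A1 \<Rightarrow> bool" where
  "A1_elem N F \<longleftrightarrow> (\<forall>k\<ge>N. fst F k = 0 \<and> snd F k = 0)"

text \<open>Homogeneity of total degree d (deg x = 2, deg \<epsilon> = 1, R_m in degree -m).\<close>

definition A1_homog :: "(int \<Rightarrow> 'r::ring_1 set) \<Rightarrow> int \<Rightarrow> 'r A1 \<Rightarrow> bool" where
  "A1_homog G d F \<longleftrightarrow> (\<forall>k. fst F k \<in> G (2 * int k - d) \<and> snd F k \<in> G (2 * int k + 1 - d))"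

text \<open>Product F * H of homogeneous elements, where odd2 is the parity of the
  degree of H.  Graded commutativity gives \<epsilon> c = (-1)^{|c|} c \<epsilon> for
  homogeneous c, and |c| \<equiv> deg H for every x^k-coefficient c of H; \<epsilon>^2 = 0.\<close>

definition A1_mul :: "nat \<Rightarrow> bool \<Rightarrow> 'r::ring_1 A1 \<Rightarrow> 'r A1 \<Rightarrow> 'r A1" where
  "A1_mul N odd2 F H =
     ((\<lambda>k. if k < N then (\<Sum>i\<le>k. fst F i * fst H (k - i)) else 0),
      (\<lambda>k. if k < N then (\<Sum>i\<le>k. fst F i * snd H (k - i)
                     + (if odd2 then - 1 else 1) * (snd F i * fst H (k - i))) else 0))"

definition A1_one :: "'r::ring_1 A1" where
  "A1_one = ((\<lambda>k. if k = 0 then 1 else 0), (\<lambda>k. 0))"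

definition A1_pow :: "nat \<Rightarrow> 'r::ring_1 A1 \<Rightarrow> nat \<Rightarrow> 'r A1" where
  "A1_pow N F k = ((A1_mul N False F) ^^ k) A1_one"

text \<open>Substitution H(F1, F2) of \<epsilon> := F1 (odd degree) and x := F2 (even degree)
  into H = \<Sum> c_k x^k + \<Sum> e_k x^k \<epsilon>, i.e.  \<Sum> c_k F2^k + \<Sum> e_k F2^k F1.\<close>

definition A1_subst :: "nat \<Rightarrow> 'r::ring_1 A1 \<Rightarrow> 'r A1 \<Rightarrow> 'r A1 \<Rightarrow> 'r A1" where
  "A1_subst N H F1 F2 =
     ((\<lambda>m. \<Sum>k<N. fst H k * fst (A1_pow N F2 k) m
                  + snd H k * fst (A1_mul N True (A1_pow N F2 k) F1) m),
      (\<lambda>m. \<Sum>k<N. fst H k * snd (A1_pow N F2 k) m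
                  + snd H k * snd (A1_mul N True (A1_pow N F2 k) F1) m))"

definition A1_cong_x2 :: "'r::ring_1 A1 \<Rightarrow> 'r A1 \<Rightarrow> bool" where
  "A1_cong_x2 F H \<longleftrightarrow> (\<forall>k<2. fst F k = fst H k \<and> snd F k = snd H k)"

text \<open>An element is represented by its coefficient function
  (i, j, s, t) \<mapsto> coefficient of x1^i x2^j \<epsilon>1^s \<epsilon>2^t (coefficients on the left,
  \<epsilon>1 before \<epsilon>2), zero unless i + j < N.\<close>

type_synonym 'r A2 = "nat \<Rightarrow> nat \<Rightarrow> bool \<Rightarrow> bool \<Rightarrow> 'r"

text \<open>F(\<epsilon>1+\<epsilon>2, x1+x2) = \<Sum> a_k (x1+x2)^k + \<Sum> b_k (x1+x2)^k (\<epsilon>1+\<epsilon>2),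
  expanded with the binomial theorem.\<close>

definition A2_subst_sum :: "nat \<Rightarrow> 'r::ring_1 A1 \<Rightarrow> 'r A2" where
  "A2_subst_sum N F = (\<lambda>i j s t.
     if i + j < N then
       (if \<not> s \<and> \<not> t then of_nat ((i + j) choose i) * fst F (i + j)
        else if s \<and> \<not> t then of_nat ((i + j) choose i) * snd F (i + j)
        else if \<not> s \<and> t then of_nat ((i + j) choose i) * snd F (i + j)
        else 0)
     else 0)"

definition A2_sep_sum :: "nat \<Rightarrow> 'r::ring_1 A1 \<Rightarrow> 'r A2" where
  "A2_sep_sum N F = (\<lambda>i j s t.
     if i + j < N then
       (if \<not> s \<and> \<not> t then (if j = 0 then fst F i else 0) + (if i = 0 then fst F j else 0)
        else if s \<and> \<not> t then (if j = 0 then snd F i else 0)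
        else if \<not> s \<and> t then (if i = 0 then snd F j else 0)
        else 0)
     else 0)"

definition A1_additive :: "nat \<Rightarrow> 'r::ring_1 A1 \<Rightarrow> bool" where
  "A1_additive N F \<longleftrightarrow> A2_subst_sum N F = A2_sep_sum N F"

definition AutGa :: "nat \<Rightarrow> nat \<Rightarrow> (int \<Rightarrow> 'r::ring_1 set) \<Rightarrow> ('r A1 \<times> 'r A1) set" where
  "AutGa p n G = {f. A1_elem (p ^ n) (fst f) \<and> A1_elem (p ^ n) (snd f) \<and>
      A1_homog G 1 (fst f) \<and> A1_homog G 2 (snd f) \<and>
      fst (fst f) 0 = 0 \<and> fst (snd f) 0 = 0 \<and>
      A1_additive (p ^ n) (fst f) \<and> A1_additive (p ^ n) (snd f) \<and>
      (\<exists>a0 \<in> G 1. A1_cong_x2 (fst f) ((\<lambda>k. if k = 1 then a0 else 0), (\<lambda>k. if k = 0 then 1 else 0))) \<and>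
      A1_cong_x2 (snd f) ((\<lambda>k. if k = 1 then 1 else 0), (\<lambda>k. 0))}"

definition aut_mult :: "nat \<Rightarrow> 'r::ring_1 A1 \<times> 'r A1 \<Rightarrow> 'r A1 \<times> 'r A1 \<Rightarrow> 'r A1 \<times> 'r A1" where
  "aut_mult N f g = (A1_subst N (fst g) (fst f) (snd f), A1_subst N (snd g) (fst f) (snd f))"

definition aut_map :: "('r \<Rightarrow> 's) \<Rightarrow> 'r A1 \<times> 'r A1 \<Rightarrow> 's A1 \<times> 's A1" where
  "aut_map \<phi> f = ((\<phi> \<circ> fst (fst f), \<phi> \<circ> snd (fst f)), (\<phi> \<circ> fst (snd f), \<phi> \<circ> snd (snd f)))"

text \<open>B_* = K(n)_*[\<xi>_1..\<xi>_{n-1}] \<otimes> E(\<tau>_0..\<tau>_{n-1}) is the free graded-commutative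
  K(n)_*-algebra on even generators \<xi>_i and odd generators \<tau>_i (p odd), so a
  K(n)_*-algebra map \<theta> : B_* \<rightarrow> R_* is the same as its values on generators:
  \<theta> is represented by (t, s) with t i = \<theta>(\<tau>_i) \<in> R_{2p^i-1} (i < n) and
  s i = \<theta>(\<xi>_i) \<in> R_{2(p^i-1)} (1 \<le> i < n); by convention s 0 = \<theta>(\<xi>_0) = 1 and
  all other values are 0.\<close>

definition HomB :: "nat \<Rightarrow> nat \<Rightarrow> (int \<Rightarrow> 'r::ring_1 set) \<Rightarrow> ((nat \<Rightarrow> 'r) \<times> (nat \<Rightarrow> 'r)) set" where
  "HomB p n G = {\<theta>. (\<forall>i<n. fst \<theta> i \<in> G (2 * int p ^ i - 1)) \<and> (\<forall>i\<ge>n. fst \<theta> i = 0) \<and>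
      snd \<theta> 0 = 1 \<and> (\<forall>i. 1 \<le> i \<and> i < n \<longrightarrow> snd \<theta> i \<in> G (2 * (int p ^ i - 1))) \<and>
      (\<forall>i\<ge>n. snd \<theta> i = 0)}"

text \<open>Convolution product \<theta> * \<theta>' = \<mu> \<circ> (\<theta> \<otimes> \<theta>') \<circ> \<Delta>, evaluated on generators via
  \<Delta>\<tau>_k = \<tau>_k \<otimes> 1 + \<Sum>_i \<xi>_{k-i}^{p^i} \<otimes> \<tau>_i,  \<Delta>\<xi>_k = \<Sum>_i \<xi>_{k-i}^{p^i} \<otimes> \<xi>_i.\<close>

definition conv :: "nat \<Rightarrow> nat \<Rightarrow> (nat \<Rightarrow> 'r::ring_1) \<times> (nat \<Rightarrow> 'r) \<Rightarrow> (nat \<Rightarrow> 'r) \<times> (nat \<Rightarrow> 'r)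
     \<Rightarrow> (nat \<Rightarrow> 'r) \<times> (nat \<Rightarrow> 'r)" where
  "conv p n \<theta> \<theta>' =
     ((\<lambda>k. if k < n then fst \<theta> k + (\<Sum>i\<le>k. snd \<theta> (k - i) ^ (p ^ i) * fst \<theta>' i) else 0),
      (\<lambda>k. if k < n then (\<Sum>i\<le>k. snd \<theta> (k - i) ^ (p ^ i) * snd \<theta>' i) else 0))"

definition hom_map :: "('r \<Rightarrow> 's) \<Rightarrow> (nat \<Rightarrow> 'r) \<times> (nat \<Rightarrow> 'r) \<Rightarrow> (nat \<Rightarrow> 's) \<times> (nat \<Rightarrow> 's)" where
  "hom_map \<phi> \<theta> = (\<phi> \<circ> fst \<theta>, \<phi> \<circ> snd \<theta>)"

definition Phi :: "nat \<Rightarrow> nat \<Rightarrow> (nat \<Rightarrow> 'r::ring_1) \<times> (nat \<Rightarrow> 'r) \<Rightarrow> 'r A1 \<times> 'r A1" where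
  "Phi p n \<theta> =
     (((\<lambda>k. \<Sum>i<n. if k = p ^ i then fst \<theta> i else 0), (\<lambda>k. if k = 0 then 1 else 0)),
      ((\<lambda>k. (if k = 1 then 1 else 0) + (\<Sum>i\<in>{1..<n}. if k = p ^ i then snd \<theta> i else 0)),
       (\<lambda>k. 0)))"

end

theory Submission
  imports Defs "HOL-Computational_Algebra.Formal_Power_Series"
begin

text \<open>Over a ring in which p = 0, a truncated series \<Sum> a_k x^k is additive exactly when
  a_k = 0 for every k that is not a power of p: for such k \<ge> 2 some binomial coefficient
  (k choose i) with 0 < i < k is a unit mod p, whereas (p^j choose i) \<equiv> 0 for 0 < i < p^j.
  Additivity also kills the terms x^k \<epsilon> with k > 0. Hence the quasi-strict automorphisms are
  exactly the pairs (\<epsilon> + \<Sum> t_i x^(p^i), x + \<Sum> s_i x^(p^i)), i.e. the values of Phi.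
  For the group law, the s_i have even degree and so commute with all homogeneous elements;
  the Frobenius then gives (\<Sum>_j s_j x^(p^j))^(p^i) = \<Sum>_j s_j^(p^i) x^(p^(i+j)), and substituting
  this into the second automorphism reproduces the coproduct formulas for \<tau>_k and \<xi>_k.\<close>

section \<open>The freshman's dream for commuting elements\<close>

lemma binomial_commuting:
  fixes a b :: "'a::semiring_1"
  assumes ab: "a * b = b * a"
  shows "(a + b) ^ n = (\<Sum>k\<le>n. of_nat (n choose k) * a ^ k * b ^ (n - k))"
proof (induction n)
  case 0
  show ?case by simp
next
  case (Suc n)
  have left: "a * (of_nat c * a ^ k * b ^ j) = of_nat c * a ^ (k + 1) * b ^ j" for c k j
  proof -
    have "a * (of_nat c * a ^ k * b ^ j) = (a * of_nat c) * a ^ k * b ^ j"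
      by (simp only: mult.assoc)
    then show ?thesis
      by (simp only: mult_of_nat_commute[symmetric] mult.assoc power_Suc Suc_eq_plus1[symmetric])
  qed
  have right: "b * (of_nat c * a ^ k * b ^ j) = of_nat c * a ^ k * b ^ (j + 1)" for c k j
  proof -
    have "b * (of_nat c * a ^ k * b ^ j) = (b * of_nat c) * a ^ k * b ^ j"
      by (simp only: mult.assoc)
    also have "\<dots> = of_nat c * (b * a ^ k) * b ^ j"
      by (simp only: mult_of_nat_commute mult.assoc)
    also have "\<dots> = of_nat c * a ^ k * b ^ (j + 1)"
      by (simp only: power_commuting_commutes[OF ab, symmetric])
        (simp only: mult.assoc power_Suc Suc_eq_plus1[symmetric])
    finally show ?thesis .
  qed
  have "(a + b) ^ (n + 1) = a * (\<Sum>k\<le>n. of_nat (n choose k) * a ^ k * b ^ (n - k))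
      + b * (\<Sum>k\<le>n. of_nat (n choose k) * a ^ k * b ^ (n - k))"
    using Suc.IH by (simp add: distrib_right)
  also have "\<dots> = (\<Sum>k\<le>n. of_nat (n choose k) * a ^ (k + 1) * b ^ (n - k))
      + (\<Sum>k\<le>n. of_nat (n choose k) * a ^ k * b ^ (n - k + 1))"
    by (simp only: sum_distrib_left left right)
  also have "\<dots> = (\<Sum>k\<le>n. of_nat (n choose k) * a ^ k * b ^ (n + 1 - k))
      + (\<Sum>k=1..n+1. of_nat (n choose (k - 1)) * a ^ k * b ^ (n + 1 - k))"
    by (simp add: atMost_atLeast0 sum.shift_bounds_cl_Suc_ivl Suc_diff_le add.commute
        del: sum.cl_ivl_Suc)
  also have "\<dots> = b ^ (n + 1) + (\<Sum>k=1..n. of_nat (n choose k) * a ^ k * b ^ (n + 1 - k))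
      + (a ^ (n + 1) + (\<Sum>k=1..n. of_nat (n choose (k - 1)) * a ^ k * b ^ (n + 1 - k)))"
    using sum.nat_ivl_Suc'[of 1 n "\<lambda>k. of_nat (n choose (k - 1)) * a ^ k * b ^ (n + 1 - k)"]
    by (simp add: sum.atLeast_Suc_atMost atMost_atLeast0)
  also have "\<dots> = a ^ (n + 1) + b ^ (n + 1)
      + (\<Sum>k=1..n. of_nat (n + 1 choose k) * a ^ k * b ^ (n + 1 - k))"
    by (auto simp add: add_ac distrib_right sum.distrib[symmetric] choose_reduce_nat)
  also have "\<dots> = (\<Sum>k\<le>n + 1. of_nat (n + 1 choose k) * a ^ k * b ^ (n + 1 - k))"
    by (simp add: atMost_atLeast0 sum.atLeast_Suc_atMost add_ac)
  finally show ?case by simp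
qed

lemma freshmans_dream_commuting:
  fixes a b :: "'a::semiring_1"
  assumes "a * b = b * a" and p: "prime p" and char: "of_nat p = (0::'a)"
  shows "(a + b) ^ p = a ^ p + b ^ p"
proof -
  have "(a + b) ^ p = (\<Sum>k\<le>p. of_nat (p choose k) * a ^ k * b ^ (p - k))"
    by (rule binomial_commuting) fact
  also have "\<dots> = (\<Sum>k\<in>{0, p}. of_nat (p choose k) * a ^ k * b ^ (p - k))"
  proof (intro sum.mono_neutral_right ballI)
    fix k assume "k \<in> {..p} - {0, p}"
    then have "p dvd (p choose k)"
      using p by (intro dvd_choose_prime) auto
    then show "of_nat (p choose k) * a ^ k * b ^ (p - k) = 0"
      using char by (auto elim!: dvdE)
  qed auto
  finally show ?thesis
    using prime_gt_0_nat[OF p] by (simp add: add.commute)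
qed

lemma freshmans_dream_commuting':
  fixes a b :: "'a::semiring_1"
  assumes ab: "a * b = b * a" and p: "prime p" and char: "of_nat p = (0::'a)"
  shows "(a + b) ^ (p ^ k) = a ^ (p ^ k) + b ^ (p ^ k)"
proof (induction k)
  case (Suc k)
  have commute: "a ^ (p ^ k) * b ^ (p ^ k) = b ^ (p ^ k) * a ^ (p ^ k)"
    by (metis ab power_commuting_commutes)
  have "(a + b) ^ (p ^ Suc k) = ((a + b) ^ (p ^ k)) ^ p"
    by (simp only: power_Suc2 power_mult)
  also have "\<dots> = (a ^ (p ^ k)) ^ p + (b ^ (p ^ k)) ^ p"
    unfolding Suc.IH by (rule freshmans_dream_commuting[OF commute p char])
  finally show ?case
    by (simp only: power_Suc2 power_mult)
qed simp

lemma freshmans_dream_sum_commuting: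
  fixes f :: "'b \<Rightarrow> 'a::semiring_1"
  assumes "\<And>i j. i \<in> A \<Longrightarrow> j \<in> A \<Longrightarrow> f i * f j = f j * f i"
    and p: "prime p" and char: "of_nat p = (0::'a)"
  shows "sum f A ^ (p ^ k) = (\<Sum>i\<in>A. f i ^ (p ^ k))"
  using assms(1)
proof (induction A rule: infinite_finite_induct)
  case (insert x A)
  have "f x * sum f A = sum f A * f x"
    using insert.prems by (simp add: sum_distrib_left sum_distrib_right)
  then show ?case
    using insert by (simp add: freshmans_dream_commuting'[OF _ p char])
qed (use prime_gt_0_nat[OF p] in \<open>simp_all add: power_0_left\<close>)

section \<open>Binomial coefficients modulo p\<close>

lemma of_nat_fps_eq_0: "of_nat p = (0::'a::ring_1) \<Longrightarrow> of_nat p = (0::'a fps)"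
  by (metis fps_of_nat fps_const_0_eq_0)

lemma fps_nth_one_plus_X_power_power:
  assumes "0 < e"
  shows "fps_nth ((1 + fps_X ^ e) ^ k) (e * i) = (of_nat (k choose i) :: 'a::ring_1)"
proof -
  have "(1 + fps_X ^ e) ^ k
      = (\<Sum>j\<le>k. fps_const (of_nat (k choose j)) * (fps_X::'a fps) ^ (e * j))"
    using binomial_commuting[of "fps_X ^ e" 1 k] by (simp add: power_mult fps_of_nat add.commute)
  then have "fps_nth ((1 + fps_X ^ e) ^ k) (e * i)
      = (\<Sum>j\<le>k. fps_nth (fps_const (of_nat (k choose j)) * (fps_X::'a fps) ^ (e * j))
          (e * i))"
    by (simp only: fps_sum_nth)
  also have "\<dots> = (\<Sum>j\<le>k. if j = i then of_nat (k choose j) else 0)"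
    using assms by (intro sum.cong) auto
  finally show ?thesis
    by (simp add: binomial_eq_0)
qed

lemma of_nat_choose_prime_power_eq_0:
  assumes p: "prime p" and char: "of_nat p = (0::'a::ring_1)" and i: "0 < i" "i < p ^ j"
  shows "of_nat (p ^ j choose i) = (0::'a)"
proof -
  have "(1 + fps_X ^ 1) ^ (p ^ j) = 1 + (fps_X :: 'a fps) ^ (p ^ j)"
    using freshmans_dream_commuting'[OF _ p of_nat_fps_eq_0[OF char], of 1 fps_X] by simp
  then have "of_nat (p ^ j choose i) = fps_nth (1 + (fps_X :: 'a fps) ^ (p ^ j)) (1 * i)"
    by (metis fps_nth_one_plus_X_power_power zero_less_one)
  then show ?thesis
    using i by simp
qed

lemma of_nat_choose_prime_power_mult:
  assumes p: "prime p" and char: "of_nat p = (0::'a::ring_1)"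
  shows "of_nat (p ^ e * m choose p ^ e) = (of_nat m :: 'a)"
proof -
  have "(1 + fps_X ^ 1) ^ (p ^ e * m) = (1 + (fps_X :: 'a fps) ^ (p ^ e)) ^ m"
    using freshmans_dream_commuting'[OF _ p of_nat_fps_eq_0[OF char], of 1 fps_X]
    by (simp add: power_mult)
  then have "of_nat (p ^ e * m choose p ^ e)
      = fps_nth ((1 + (fps_X :: 'a fps) ^ (p ^ e)) ^ m) (p ^ e * 1)"
    by (metis fps_nth_one_plus_X_power_power zero_less_one mult_1 mult_1_right)
  also have "\<dots> = of_nat m"
    using prime_gt_0_nat[OF p] by (subst fps_nth_one_plus_X_power_power) simp_all
  finally show ?thesis .
qed

lemma of_nat_left_invertible_if_not_dvd:
  assumes p: "prime p" and char: "of_nat p = (0::'a::ring_1)" and "\<not> p dvd m"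
  shows "\<exists>u. of_nat u * (of_nat m :: 'a) = 1"
proof -
  have "m \<noteq> 0"
    using assms by (metis dvd_0_right)
  moreover have "gcd m p = 1"
    using assms by (metis prime_imp_coprime coprime_commute coprime_iff_gcd_eq_1)
  ultimately obtain x y where "m * x = p * y + 1"
    using bezout_nat by metis
  then have "of_nat m * of_nat x = (1::'a)"
    using char by (metis add_0 mult_zero_left of_nat_1 of_nat_add of_nat_mult)
  then show ?thesis
    by (metis mult_of_nat_commute)
qed

lemma not_prime_power_choose_invertible:
  assumes p: "prime p" and char: "of_nat p = (0::'a::ring_1)"
    and "2 \<le> k" and not_power: "\<And>j. k \<noteq> p ^ j"
  obtains i u where "0 < i" "i < k" "of_nat u * (of_nat (k choose i) :: 'a) = 1"
proof -
  have "k \<noteq> 0" "\<not> is_unit p"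
    using assms by auto
  then obtain m where k: "k = p ^ multiplicity p k * m" and m: "\<not> p dvd m"
    by (rule multiplicity_decompose')
  have "m \<noteq> 1"
    using k not_power by auto
  moreover have "m \<noteq> 0"
    using m by (metis dvd_0_right)
  ultimately have "p ^ multiplicity p k < k"
    using prime_gt_0_nat[OF p] by (subst (2) k) simp
  moreover obtain u where "of_nat u * (of_nat m :: 'a) = 1"
    using of_nat_left_invertible_if_not_dvd[OF p char m] by blast
  ultimately show ?thesis
    using that[of "p ^ multiplicity p k" u] k of_nat_choose_prime_power_mult[OF p char]
    using prime_gt_0_nat[OF p] by (metis zero_less_power)
qed

section \<open>Coefficients of p-polynomials\<close>

definition p_poly :: "nat \<Rightarrow> nat \<Rightarrow> (nat \<Rightarrow> 'a::comm_monoid_add) \<Rightarrow> nat \<Rightarrow> 'a" where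
  "p_poly p n c m = (\<Sum>i<n. if m = p ^ i then c i else 0)"

lemma p_poly_p_power: "1 < p \<Longrightarrow> i < n \<Longrightarrow> p_poly p n c (p ^ i) = c i"
  by (simp add: p_poly_def power_inject_exp)

lemma p_poly_eq_0: "(\<And>i. i < n \<Longrightarrow> m \<noteq> p ^ i) \<Longrightarrow> p_poly p n c m = 0"
  by (simp add: p_poly_def)

lemma p_poly_eq_0_if_ge: "1 < p \<Longrightarrow> p ^ n \<le> m \<Longrightarrow> p_poly p n c m = 0"
  by (metis p_poly_eq_0 power_strict_increasing not_less)

lemma p_poly_0: "0 < p \<Longrightarrow> p_poly p n c 0 = 0"
  by (simp add: p_poly_eq_0)

lemma p_poly_cases:
  assumes "1 < p"
  obtains i where "i < n" "m = p ^ i" "p_poly p n c m = c i"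
  | "\<And>i. i < n \<Longrightarrow> m \<noteq> p ^ i" "p_poly p n c m = 0"
proof (cases "\<exists>i<n. m = p ^ i")
  case True
  then show ?thesis
    using that(1) p_poly_p_power[OF assms] by blast
next
  case False
  then show ?thesis
    using that(2) p_poly_eq_0 by blast
qed

lemma p_poly_inject: "1 < p \<Longrightarrow> p_poly p n c = p_poly p n d \<Longrightarrow> i < n \<Longrightarrow> c i = d i"
  by (metis p_poly_p_power)

lemma p_poly_cong: "(\<And>i. i < n \<Longrightarrow> c i = d i) \<Longrightarrow> p_poly p n c = p_poly p n d"
  unfolding p_poly_def by (intro ext sum.cong) auto

lemma p_poly_add: "p_poly p n c m + p_poly p n d m = p_poly p n (\<lambda>i. c i + d i) m"
  unfolding p_poly_def sum.distrib[symmetric] by (intro sum.cong) auto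

lemma mult_p_poly:
  fixes a :: "'a::semiring_0"
  shows "a * p_poly p n c m = p_poly p n (\<lambda>i. a * c i) m"
  unfolding p_poly_def sum_distrib_left by (intro sum.cong) auto

lemma sum_p_poly: "(\<Sum>j\<in>A. p_poly p n (c j) m) = p_poly p n (\<lambda>i. \<Sum>j\<in>A. c j i) m"
  unfolding p_poly_def by (subst sum.swap) (auto intro!: sum.cong)

lemma sum_p_poly_mult:
  fixes X :: "nat \<Rightarrow> 'a::semiring_0"
  assumes "1 < p"
  shows "(\<Sum>m<p ^ n. p_poly p n c m * X m) = (\<Sum>i<n. c i * X (p ^ i))"
proof -
  have "(\<Sum>m<p ^ n. p_poly p n c m * X m)
      = (\<Sum>i<n. \<Sum>m<p ^ n. if m = p ^ i then c i * X m else 0)"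
    by (simp add: p_poly_def sum_distrib_right if_distrib[of "\<lambda>x. x * _"] sum.swap[of _ "{..<n}"]
        cong: if_cong)
  also have "\<dots> = (\<Sum>i<n. c i * X (p ^ i))"
    using assms by (intro sum.cong) (simp_all add: power_strict_increasing)
  finally show ?thesis .
qed

lemma p_poly_mem:
  assumes "1 < p" "\<And>i. i < n \<Longrightarrow> c i \<in> S (p ^ i)" "0 \<in> S m"
  shows "p_poly p n c m \<in> S m"
  by (cases rule: p_poly_cases[OF assms(1), of n m c]) (use assms in auto)

lemma fps_nth_const_mult_X_power:
  "fps_nth (fps_const c * fps_X ^ e) m = (if m = e then c else 0)"
  by simp

lemma fps_const_mult_X_power_mult:
  "fps_const (a::'a::ring_1) * fps_X ^ e * (fps_const b * fps_X ^ f)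
    = fps_const (a * b) * fps_X ^ (e + f)"
proof -
  have "fps_const a * fps_X ^ e * (fps_const b * fps_X ^ f)
      = fps_const a * (fps_X ^ e * fps_const b) * fps_X ^ f"
    by (simp only: mult.assoc)
  also have "\<dots> = fps_const (a * b) * fps_X ^ (e + f)"
    by (subst fps_mult_fps_X_power_commute)
      (simp only: mult.assoc power_add fps_const_mult[symmetric])
  finally show ?thesis .
qed

lemma fps_const_mult_X_power_power:
  "(fps_const (c::'a::ring_1) * fps_X ^ e) ^ k = fps_const (c ^ k) * fps_X ^ (e * k)"
  by (induction k) (simp_all only: power_Suc fps_const_mult_X_power_mult power_0 mult_0_right
      fps_const_1_eq_1 mult_1 mult_Suc_right)

lemma fps_nth_p_poly_power:
  fixes c :: "nat \<Rightarrow> 'a::ring_1"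
  assumes p: "prime p" and char: "of_nat p = (0::'a)"
    and comm: "\<And>i j. c i * c j = c j * c i" and m: "m < p ^ n"
  shows "fps_nth (Abs_fps (p_poly p n c) ^ (p ^ k)) m
    = p_poly p n (\<lambda>i. if k \<le> i then c (i - k) ^ (p ^ k) else 0) m"
proof -
  have p1: "1 < p"
    using p prime_gt_1_nat by blast
  have fps: "Abs_fps (p_poly p n c) = (\<Sum>i<n. fps_const (c i) * fps_X ^ (p ^ i))"
    by (rule fps_ext)
      (simp only: fps_sum_nth fps_nth_const_mult_X_power p_poly_def fps_nth_Abs_fps)
  have "fps_const (c i) * fps_X ^ (p ^ i) * (fps_const (c j) * fps_X ^ (p ^ j))
      = fps_const (c j) * fps_X ^ (p ^ j) * (fps_const (c i) * fps_X ^ (p ^ i))" for i j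
    unfolding fps_const_mult_X_power_mult by (simp only: comm add.commute)
  then have "Abs_fps (p_poly p n c) ^ (p ^ k)
      = (\<Sum>i<n. (fps_const (c i) * fps_X ^ (p ^ i)) ^ (p ^ k))"
    unfolding fps by (rule freshmans_dream_sum_commuting[OF _ p of_nat_fps_eq_0[OF char]])
  then have nth: "fps_nth (Abs_fps (p_poly p n c) ^ (p ^ k)) m
      = (\<Sum>i<n. if m = p ^ (i + k) then c i ^ p ^ k else 0)"
    by (simp only: fps_sum_nth fps_const_mult_X_power_power fps_nth_const_mult_X_power
        power_add)
  show ?thesis
  proof (cases rule: p_poly_cases[OF p1, of n m c])
    case (1 j)
    have "(\<Sum>i<n. if m = p ^ (i + k) then c i ^ p ^ k else 0)
        = (\<Sum>i<n. if i = j - k \<and> k \<le> j then c i ^ p ^ k else 0)"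
      using 1 p1 by (intro sum.cong) (auto simp: power_inject_exp)
    also have "\<dots> = (if k \<le> j then c (j - k) ^ p ^ k else 0)"
      using 1 by (cases "k \<le> j") auto
    finally show ?thesis
      unfolding nth using 1 p1 by (simp add: p_poly_p_power)
  next
    case 2
    have "i + k < n" if "m = p ^ (i + k)" for i
      using m that p1 power_strict_increasing_iff by metis
    then show ?thesis
      unfolding nth using 2 by (force intro!: sum.neutral simp: p_poly_eq_0)
  qed
qed

lemma fst_A1_pow:
  assumes "0 < N"
  shows "fst (A1_pow N F k) m = (if m < N then fps_nth (Abs_fps (fst F) ^ k) m else 0)"
proof (induction k arbitrary: m)
  case 0
  show ?case
    using assms by (simp add: A1_pow_def A1_one_def)
next
  case (Suc k)
  have "(\<Sum>i\<le>m. fst F i * fst (A1_pow N F k) (m - i))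
      = fps_nth (Abs_fps (fst F) ^ Suc k) m" if "m < N"
    using that by (auto simp: Suc.IH fps_mult_nth atMost_atLeast0 intro!: sum.cong)
  then show ?case
    by (simp add: A1_pow_def A1_mul_def)
qed

lemma snd_A1_pow: "snd F = (\<lambda>_. 0) \<Longrightarrow> snd (A1_pow N F k) = (\<lambda>_. 0)"
  by (induction k) (simp_all add: A1_pow_def A1_one_def A1_mul_def fun_eq_iff)

lemma A1_mul_one_left: "A1_elem N H \<Longrightarrow> A1_mul N b A1_one H = H"
  by (auto simp: A1_mul_def A1_one_def A1_elem_def prod_eq_iff fun_eq_iff not_less
      if_distrib[where f = "\<lambda>x. x * _"] cong: if_cong)

lemma A1_subst_p_poly:
  assumes p: "1 < p" and F1: "A1_elem (p ^ n) F1" and F2: "snd F2 = (\<lambda>_. 0)"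
  shows "A1_subst (p ^ n) (p_poly p n c, \<lambda>k. if k = 0 then \<beta> else 0) F1 F2
    = ((\<lambda>m. (\<Sum>i<n. c i * fst (A1_pow (p ^ n) F2 (p ^ i)) m) + \<beta> * fst F1 m),
       (\<lambda>m. \<beta> * snd F1 m))"
proof -
  have delta: "(\<Sum>k<p ^ n. (if k = 0 then \<beta> else 0) * X k) = \<beta> * X 0" for X
    using p by (simp add: if_distrib[where f = "\<lambda>x. x * _"] cong: if_cong)
  have "A1_mul (p ^ n) True (A1_pow (p ^ n) F2 0) F1 = F1"
    using A1_mul_one_left[OF F1] by (simp add: A1_pow_def)
  then show ?thesis
    unfolding A1_subst_def using p
    by (simp add: sum.distrib delta sum_p_poly_mult snd_A1_pow[OF F2])
qed

lemma fst_A1_pow_p_poly: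
  fixes c :: "nat \<Rightarrow> 'a::ring_1"
  assumes p: "prime p" and char: "of_nat p = (0::'a)"
    and comm: "\<And>i j. c i * c j = c j * c i"
  shows "fst (A1_pow (p ^ n) (p_poly p n c, \<lambda>_. 0) (p ^ k))
    = p_poly p n (\<lambda>i. if k \<le> i then c (i - k) ^ (p ^ k) else 0)"
proof
  fix m
  have "1 < p"
    using p prime_gt_1_nat by blast
  then show "fst (A1_pow (p ^ n) (p_poly p n c, \<lambda>_. 0) (p ^ k)) m
      = p_poly p n (\<lambda>i. if k \<le> i then c (i - k) ^ (p ^ k) else 0) m"
    by (simp add: fst_A1_pow fps_nth_p_poly_power[OF p char comm] p_poly_eq_0_if_ge)
qed

lemma p_poly_additive:
  fixes c :: "nat \<Rightarrow> 'a::ring_1"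
  assumes p: "prime p" and char: "of_nat p = (0::'a)"
  shows "A1_additive (p ^ n) (p_poly p n c, \<lambda>k. if k = 0 then \<beta> else 0)"
proof -
  have p1: "1 < p"
    using p prime_gt_1_nat by blast
  have "of_nat ((i + j) choose i) * p_poly p n c (i + j)
      = (if j = 0 then p_poly p n c i else 0) + (if i = 0 then p_poly p n c j else 0)" for i j
  proof (cases "i = 0 \<or> j = 0")
    case True
    then show ?thesis
      using p_poly_0[of p n c] p1 by auto
  next
    case False
    show ?thesis
    proof (cases rule: p_poly_cases[OF p1, of n "i + j" c])
      case (1 K)
      then have "of_nat (p ^ K choose i) = (0::'a)"
        using False by (intro of_nat_choose_prime_power_eq_0[OF p char]) auto
      then show ?thesis
        using 1 False by simp
    qed (use False in simp)
  qed
  then show ?thesis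
    unfolding A1_additive_def A2_subst_sum_def A2_sep_sum_def by (intro ext) auto
qed

lemma A1_additive_snd_eq_0:
  assumes "A1_additive N F" "A1_elem N F" "0 < k"
  shows "snd F k = 0"
proof (cases "k < N")
  case True
  have "A2_subst_sum N F 0 k True False = A2_sep_sum N F 0 k True False"
    using assms(1) by (simp add: A1_additive_def)
  then show ?thesis
    using True assms(3) by (simp add: A2_subst_sum_def A2_sep_sum_def)
qed (use assms(2) in \<open>simp add: A1_elem_def\<close>)

lemma A1_additive_fst_eq_0_if_not_p_power:
  fixes F :: "'a::ring_1 A1"
  assumes p: "prime p" and char: "of_nat p = (0::'a)" and additive: "A1_additive N F"
    and "2 \<le> k" "k < N" and not_power: "\<And>j. k \<noteq> p ^ j"
  shows "fst F k = 0"
proof -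
  obtain i u where i: "0 < i" "i < k" and u: "of_nat u * (of_nat (k choose i) :: 'a) = 1"
    by (rule not_prime_power_choose_invertible[OF p char \<open>2 \<le> k\<close> not_power])
  have "A2_subst_sum N F i (k - i) False False = A2_sep_sum N F i (k - i) False False"
    using additive by (simp add: A1_additive_def)
  then have "of_nat (k choose i) * fst F k = 0"
    using i \<open>k < N\<close> by (simp add: A2_subst_sum_def A2_sep_sum_def)
  then have "of_nat u * of_nat (k choose i) * fst F k = 0"
    by (simp add: mult.assoc)
  then show ?thesis
    using u by simp
qed

lemma A1_additive_fst_eq_p_poly:
  fixes F :: "'a::ring_1 A1"
  assumes p: "prime p" and char: "of_nat p = (0::'a)"
    and additive: "A1_additive (p ^ n) F" and elem: "A1_elem (p ^ n) F" and "fst F 0 = 0"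
  shows "fst F = p_poly p n (\<lambda>i. fst F (p ^ i))"
proof
  fix k
  have p1: "1 < p"
    using p prime_gt_1_nat by blast
  show "fst F k = p_poly p n (\<lambda>i. fst F (p ^ i)) k"
  proof (cases rule: p_poly_cases[OF p1, of n k "\<lambda>i. fst F (p ^ i)"])
    case 2
    consider "p ^ n \<le> k" | "k = 0" | "k < p ^ n" "k \<noteq> 0"
      by linarith
    then have "fst F k = 0"
    proof cases
      case 3
      then have "n \<noteq> 0"
        by (metis power_0 less_one)
      then have "2 \<le> k"
        using 2(1)[of 0] 3 by simp
      moreover have "k \<noteq> p ^ j" for j
        using 2(1)[of j] 3 p1 by (metis not_less power_increasing_iff order_less_le_trans)
      ultimately show ?thesis
        using A1_additive_fst_eq_0_if_not_p_power[OF p char additive] 3 by blast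
    qed (use elem assms(5) in \<open>auto simp: A1_elem_def\<close>)
    then show ?thesis
      using 2(2) by simp
  qed simp
qed

lemma A1_additive_eq_p_poly:
  fixes F :: "'a::ring_1 A1"
  assumes "prime p" "of_nat p = (0::'a)" "A1_additive (p ^ n) F" "A1_elem (p ^ n) F"
    "fst F 0 = 0"
  shows "F = (p_poly p n (\<lambda>i. fst F (p ^ i)), \<lambda>k. if k = 0 then snd F 0 else 0)"
proof -
  have "snd F = (\<lambda>k. if k = 0 then snd F 0 else 0)"
    using A1_additive_snd_eq_0[OF assms(3,4)] by auto
  then show ?thesis
    using A1_additive_fst_eq_p_poly[OF assms] by (metis prod.collapse)
qed

section \<open>The correspondence\<close>

lemma graded_comm_even_commute:
  assumes "graded_comm G" "a \<in> G (2 * m)" "b \<in> G k"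
  shows "a * b = b * a"
  using assms unfolding graded_comm_def by (metis even_mult_iff even_two_times_div_two dvd_triv_left)

lemma HomB_snd_mem:
  assumes "graded_ring G" "\<theta> \<in> HomB p n G"
  shows "snd \<theta> i \<in> G (2 * (int p ^ i - 1))"
  using assms unfolding HomB_def graded_ring_def
  by (cases "i = 0"; cases "i < n") auto

lemma HomB_snd_commute:
  assumes "graded_ring G" "graded_comm G" "\<theta> \<in> HomB p n G" "b \<in> G k"
  shows "snd \<theta> i ^ q * b = b * snd \<theta> i ^ q"
  using graded_comm_even_commute[OF assms(2) HomB_snd_mem[OF assms(1,3)] assms(4)]
  by (rule power_commuting_commutes)

lemma Phi_eq_p_poly:
  assumes "1 \<le> n" "snd \<theta> 0 = 1"
  shows "Phi p n \<theta>
    = ((p_poly p n (fst \<theta>), \<lambda>k. if k = 0 then 1 else 0), (p_poly p n (snd \<theta>), \<lambda>_. 0))"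
proof -
  have "{..<n} = insert 0 {1..<n}"
    using assms by auto
  then show ?thesis
    using assms by (simp add: Phi_def p_poly_def fun_eq_iff)
qed

lemma sum_lessThan_if_le:
  assumes "K < (n::nat)"
  shows "(\<Sum>i<n. if i \<le> K then f i else 0) = (\<Sum>i\<le>K. f i)"
proof -
  have "{i \<in> {..<n}. i \<le> K} = {..K}"
    using assms by auto
  then show ?thesis
    by (simp flip: sum.inter_filter)
qed

lemma conv_eq_sum_lessThan:
  fixes G :: "int \<Rightarrow> 'r::ring_1 set"
  assumes G: "graded_ring G" "graded_comm G"
    and \<theta>: "\<theta> \<in> HomB p n G" and \<theta>': "\<theta>' \<in> HomB p n G" and "K < n"
  defines "h \<equiv> \<lambda>i. if i \<le> K then snd \<theta> (K - i) ^ p ^ i else 0"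
  shows "fst (conv p n \<theta> \<theta>') K = (\<Sum>i<n. fst \<theta>' i * h i) + fst \<theta> K"
    and "snd (conv p n \<theta> \<theta>') K = (\<Sum>i<n. snd \<theta>' i * h i)"
proof -
  have "snd \<theta> j ^ q * fst \<theta>' i = fst \<theta>' i * snd \<theta> j ^ q" for i j q
  proof (cases "i < n")
    case True
    then have "fst \<theta>' i \<in> G (2 * int p ^ i - 1)"
      using \<theta>' by (simp add: HomB_def)
    then show ?thesis
      by (rule HomB_snd_commute[OF G \<theta>])
  qed (use \<theta>' in \<open>simp add: HomB_def\<close>)
  then have "(\<Sum>i\<le>K. snd \<theta> (K - i) ^ p ^ i * fst \<theta>' i) = (\<Sum>i<n. fst \<theta>' i * h i)"
    using \<open>K < n\<close> unfolding h_def
    by (simp add: if_distrib[where f = "times _"] sum_lessThan_if_le cong: if_cong)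
  then show "fst (conv p n \<theta> \<theta>') K = (\<Sum>i<n. fst \<theta>' i * h i) + fst \<theta> K"
    using \<open>K < n\<close> by (simp add: conv_def add.commute)
  have "snd \<theta> j ^ q * snd \<theta>' i = snd \<theta>' i * snd \<theta> j ^ q" for i j q
    using HomB_snd_commute[OF G \<theta> HomB_snd_mem[OF G(1) \<theta>']] .
  then have "(\<Sum>i\<le>K. snd \<theta> (K - i) ^ p ^ i * snd \<theta>' i) = (\<Sum>i<n. snd \<theta>' i * h i)"
    using \<open>K < n\<close> unfolding h_def
    by (simp add: if_distrib[where f = "times _"] sum_lessThan_if_le cong: if_cong)
  then show "snd (conv p n \<theta> \<theta>') K = (\<Sum>i<n. snd \<theta>' i * h i)"
    using \<open>K < n\<close> by (simp add: conv_def)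
qed

lemma Phi_conv:
  fixes G :: "int \<Rightarrow> 'r::ring_1 set"
  assumes p: "prime p" and n: "1 \<le> n" and G: "gc_Kn_alg p n G v"
    and \<theta>: "\<theta> \<in> HomB p n G" and \<theta>': "\<theta>' \<in> HomB p n G"
  shows "Phi p n (conv p n \<theta> \<theta>') = aut_mult (p ^ n) (Phi p n \<theta>) (Phi p n \<theta>')"
proof -
  have gr: "graded_ring G" "graded_comm G" and char: "of_nat p = (0::'r)"
    using G by (auto simp: gc_Kn_alg_def)
  have p1: "1 < p"
    using p prime_gt_1_nat by blast
  define F1 where "F1 = (p_poly p n (fst \<theta>), \<lambda>k::nat. if k = 0 then (1::'r) else 0)"
  define F2 where "F2 = (p_poly p n (snd \<theta>), \<lambda>_::nat. (0::'r))"
  define h where "h = (\<lambda>i K. if i \<le> K then snd \<theta> (K - i) ^ p ^ i else 0)"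
  have "snd \<theta> i * snd \<theta> j = snd \<theta> j * snd \<theta> i" for i j
    using HomB_snd_commute[OF gr \<theta> HomB_snd_mem[OF gr(1) \<theta>], of i 1 j] by simp
  then have "fst (A1_pow (p ^ n) F2 (p ^ i)) = p_poly p n (h i)" for i
    unfolding F2_def h_def by (rule fst_A1_pow_p_poly[OF p char])
  moreover have "A1_elem (p ^ n) F1"
    using p1 by (simp add: A1_elem_def F1_def p_poly_eq_0_if_ge)
  ultimately have subst: "A1_subst (p ^ n) (p_poly p n c, \<lambda>k. if k = 0 then \<beta> else 0) F1 F2
      = (p_poly p n (\<lambda>K. (\<Sum>i<n. c i * h i K) + \<beta> * fst \<theta> K),
         \<lambda>k. if k = 0 then \<beta> else 0)" for c \<beta>
    using A1_subst_p_poly[OF p1, of n F1 F2 c \<beta>]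
    by (simp add: F1_def F2_def mult_p_poly sum_p_poly p_poly_add fun_eq_iff)
  have "A1_subst (p ^ n) (p_poly p n (fst \<theta>'), \<lambda>k. if k = 0 then 1 else 0) F1 F2
      = (p_poly p n (fst (conv p n \<theta> \<theta>')), \<lambda>k. if k = 0 then 1 else 0)"
    unfolding subst h_def using conv_eq_sum_lessThan(1)[OF gr \<theta> \<theta>']
    by (auto intro!: p_poly_cong)
  moreover have "A1_subst (p ^ n) (p_poly p n (snd \<theta>'), \<lambda>_. 0) F1 F2
      = (p_poly p n (snd (conv p n \<theta> \<theta>')), \<lambda>_. 0)"
    using subst[of "snd \<theta>'" 0] conv_eq_sum_lessThan(2)[OF gr \<theta> \<theta>'] unfolding h_def
    by (auto intro!: p_poly_cong)
  moreover have "snd \<theta> 0 = 1" "snd \<theta>' 0 = 1" "snd (conv p n \<theta> \<theta>') 0 = 1"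
    using \<theta> \<theta>' n by (simp_all add: HomB_def conv_def)
  ultimately show ?thesis
    by (simp add: Phi_eq_p_poly[OF n] aut_mult_def F1_def F2_def)
qed

lemma Phi_mem_AutGa:
  fixes G :: "int \<Rightarrow> 'r::ring_1 set"
  assumes p: "prime p" and n: "1 \<le> n" and G: "gc_Kn_alg p n G v" and \<theta>: "\<theta> \<in> HomB p n G"
  shows "Phi p n \<theta> \<in> AutGa p n G"
proof -
  have gr: "graded_ring G" and char: "of_nat p = (0::'r)"
    using G by (auto simp: gc_Kn_alg_def)
  then have G0: "0 \<in> G m" and G1: "1 \<in> G 0" for m
    by (simp_all add: graded_ring_def)
  have p1: "1 < p"
    using p prime_gt_1_nat by blast
  have t: "fst \<theta> i \<in> G (2 * int (p ^ i) - 1)" if "i < n" for i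
    using \<theta> that by (simp add: HomB_def)
  have s: "snd \<theta> i \<in> G (2 * int (p ^ i) - 2)" for i
    using HomB_snd_mem[OF gr \<theta>, of i] by (simp add: algebra_simps)
  have \<theta>0: "snd \<theta> 0 = 1"
    using \<theta> by (simp add: HomB_def)
  have at0: "p_poly p n c 0 = 0" and at1: "p_poly p n c 1 = c 0" for c :: "nat \<Rightarrow> 'r"
    using p_poly_0[of p n c] p_poly_p_power[OF p1, of 0 n c] p1 n by simp_all
  have elem: "A1_elem (p ^ n) (p_poly p n c, \<lambda>k. if k = 0 then \<beta> else 0)" for c and \<beta> :: 'r
    using p1 by (simp add: A1_elem_def p_poly_eq_0_if_ge)
  have "A1_homog G 1 (p_poly p n (fst \<theta>), \<lambda>k. if k = 0 then 1 else 0)"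
    using p_poly_mem[OF p1, of n "fst \<theta>" "\<lambda>k. G (2 * int k - 1)"] t G0 G1
    by (simp add: A1_homog_def)
  moreover have "A1_homog G 2 (p_poly p n (snd \<theta>), \<lambda>_. 0)"
    using p_poly_mem[OF p1, of n "snd \<theta>" "\<lambda>k. G (2 * int k - 2)"] s G0
    by (simp add: A1_homog_def)
  moreover have "A1_cong_x2 (p_poly p n (fst \<theta>), \<lambda>k. if k = 0 then 1 else 0)
      ((\<lambda>k. if k = 1 then fst \<theta> 0 else 0), (\<lambda>k. if k = 0 then 1 else 0))"
    using at0 at1 by (auto simp: A1_cong_x2_def less_2_cases_iff)
  moreover have "A1_cong_x2 (p_poly p n (snd \<theta>), \<lambda>_. 0) ((\<lambda>k. if k = 1 then 1 else 0), (\<lambda>_. 0))"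
    using at0 at1 \<theta>0 by (auto simp: A1_cong_x2_def less_2_cases_iff)
  moreover have "fst \<theta> 0 \<in> G 1"
    using t[of 0] n by simp
  moreover have "A1_elem (p ^ n) (p_poly p n c, \<lambda>_. 0)" "A1_additive (p ^ n) (p_poly p n c, \<lambda>_. 0)"
    for c :: "nat \<Rightarrow> 'r"
    using elem[of c 0] p_poly_additive[OF p char, of n c 0] by (simp_all cong: if_cong)
  ultimately show ?thesis
    unfolding Phi_eq_p_poly[OF n \<theta>0] AutGa_def
    using elem p_poly_additive[OF p char] at0 by auto
qed

lemma inj_on_Phi:
  assumes p: "prime p" and n: "1 \<le> n"
  shows "inj_on (Phi p n) (HomB p n G)"
proof
  fix \<theta> \<theta>'
  assume \<theta>: "\<theta> \<in> HomB p n G" and \<theta>': "\<theta>' \<in> HomB p n G" and eq: "Phi p n \<theta> = Phi p n \<theta>'"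
  have p1: "1 < p"
    using p prime_gt_1_nat by blast
  have "snd \<theta> 0 = 1" "snd \<theta>' 0 = 1"
    using \<theta> \<theta>' by (simp_all add: HomB_def)
  then have "p_poly p n (fst \<theta>) = p_poly p n (fst \<theta>')" "p_poly p n (snd \<theta>) = p_poly p n (snd \<theta>')"
    using eq by (simp_all add: Phi_eq_p_poly[OF n])
  then have "fst \<theta> i = fst \<theta>' i \<and> snd \<theta> i = snd \<theta>' i" for i
    using \<theta> \<theta>' p_poly_inject[OF p1] by (cases "i < n") (auto simp: HomB_def)
  then show "\<theta> = \<theta>'"
    by (simp add: prod_eq_iff fun_eq_iff)
qed

lemma AutGa_subset_Phi_image:
  fixes G :: "int \<Rightarrow> 'r::ring_1 set"
  assumes p: "prime p" and n: "1 \<le> n" and G: "gc_Kn_alg p n G v"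
  shows "AutGa p n G \<subseteq> Phi p n ` HomB p n G"
proof
  fix f
  assume f: "f \<in> AutGa p n G"
  have char: "of_nat p = (0::'r)"
    using G by (simp add: gc_Kn_alg_def)
  define \<theta> where "\<theta> = ((\<lambda>i. if i < n then fst (fst f) (p ^ i) else 0),
    (\<lambda>i. if i < n then fst (snd f) (p ^ i) else 0))"
  have f01: "snd (fst f) 0 = 1" "snd (snd f) 0 = 0" "fst (snd f) 1 = 1"
    using f by (auto simp: AutGa_def A1_cong_x2_def)
  then have \<theta>0: "snd \<theta> 0 = 1"
    using n by (simp add: \<theta>_def)
  have homog: "fst (fst f) k \<in> G (2 * int k - 1)" "fst (snd f) k \<in> G (2 * int k - 2)" for k
    using f by (simp_all add: AutGa_def A1_homog_def)
  have "fst (fst f) (p ^ i) \<in> G (2 * int p ^ i - 1)"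
    "fst (snd f) (p ^ i) \<in> G (2 * (int p ^ i - 1))" for i
    using homog[of "p ^ i"] by (simp_all add: algebra_simps)
  then have "\<theta> \<in> HomB p n G"
    using \<theta>0 by (simp add: HomB_def \<theta>_def)
  moreover have "Phi p n \<theta> = f"
  proof -
    have fst_f: "fst f
        = (p_poly p n (\<lambda>i. fst (fst f) (p ^ i)), \<lambda>k. if k = 0 then snd (fst f) 0 else 0)"
      and snd_f: "snd f
        = (p_poly p n (\<lambda>i. fst (snd f) (p ^ i)), \<lambda>k. if k = 0 then snd (snd f) 0 else 0)"
      using f by (auto simp: AutGa_def intro!: A1_additive_eq_p_poly[OF p char])
    have "p_poly p n (\<lambda>i. fst (fst f) (p ^ i)) = p_poly p n (fst \<theta>)"
      "p_poly p n (\<lambda>i. fst (snd f) (p ^ i)) = p_poly p n (snd \<theta>)"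
      by (auto simp: \<theta>_def intro: p_poly_cong)
    note eqs = this f01(1,2) if_cancel
    show ?thesis
      using fst_f[unfolded eqs] snd_f[unfolded eqs]
      by (simp add: Phi_eq_p_poly[OF n \<theta>0] prod_eq_iff)
  qed
  ultimately show "f \<in> Phi p n ` HomB p n G"
    by blast
qed

lemma Phi_hom_map:
  assumes "Kn_alg_hom G v G' v' \<phi>"
  shows "Phi p n (hom_map \<phi> \<theta>) = aut_map \<phi> (Phi p n \<theta>)"
proof -
  have add: "\<phi> (a + b) = \<phi> a + \<phi> b" and "\<phi> 1 = 1" for a b
    using assms by (simp_all add: Kn_alg_hom_def)
  moreover have "\<phi> 0 = 0"
    using add[of 0 0] by simp
  ultimately show ?thesis
    by (simp add: Phi_def hom_map_def aut_map_def fun_eq_iff if_distrib[of \<phi>]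
        sum_comp_morphism[of \<phi>, symmetric, unfolded comp_def] cong: if_cong)
qed

theorem proposition4p3:
  fixes p n :: nat
    and G :: "int \<Rightarrow> 'r::ring_1 set" and v :: 'r
    and G' :: "int \<Rightarrow> 's::ring_1 set" and v' :: 's
  assumes "prime p" and "odd p" and "n \<ge> 1"
    and "gc_Kn_alg p n G v"
  shows "bij_betw (Phi p n) (HomB p n G) (AutGa p n G)
    \<and> (\<forall>\<theta>\<in>HomB p n G. \<forall>\<theta>'\<in>HomB p n G.
         Phi p n (conv p n \<theta> \<theta>') = aut_mult (p ^ n) (Phi p n \<theta>) (Phi p n \<theta>'))
    \<and> (gc_Kn_alg p n G' v' \<longrightarrow>
         (\<forall>\<phi>. Kn_alg_hom G v G' v' \<phi> \<longrightarrow>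
            (\<forall>\<theta>\<in>HomB p n G. Phi p n (hom_map \<phi> \<theta>) = aut_map \<phi> (Phi p n \<theta>))))"
proof -
  have "Phi p n ` HomB p n G = AutGa p n G"
    using Phi_mem_AutGa[OF assms(1,3,4)] AutGa_subset_Phi_image[OF assms(1,3,4)] by blast
  then have "bij_betw (Phi p n) (HomB p n G) (AutGa p n G)"
    using inj_on_Phi[OF assms(1,3)] by (simp add: bij_betw_def)
  then show ?thesis
    using Phi_conv[OF assms(1,3,4)] Phi_hom_map by blast
qed

end
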